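(* Let $n\ge4$ be even, $1\le i\le n-1$, $y\in Y_i$ and $s\in\{s_1,\dots,s_{n-1}\}$ with $sys\notin Y_i$. (a) If $i=1$ then $s=s_2$. (b) If $2\le i\le n-2$ then $s\in\{s_1,s_i,s_{i+1}\}$. (c) If $i=n-1$ then $s\in\{s_1,s_{n-1}\}$.
   Context: $s_i=(i,i+1)$; permutations compose right to left. $\mathcal F_m$ is the set of fixed-point-free involutions in $S_m$. Regard $\mathcal F_{n-2}\subset S_n$; $w_0$ longest element of $S_n$; $Y_1=\{w_0zs_{n-1}w_0:z\in\mathcal F_{n-2}\}$; $\sigma_i=s_is_{i-1}\cdots s_1$; $Y_i=\sigma_iY_1\sigma_i^{-1}$. *)

theory Defs
  imports "HOL-Combinatorics.Combinatorics"
begin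

text \<open>Permutations of {1..n} are functions nat => nat that permute {1..n}
  (identity elsewhere); composition is function composition (right to left).\<close>

definition sgen :: "nat \<Rightarrow> nat \<Rightarrow> nat" where
  "sgen i = transpose i (i + 1)"

definition longest :: "nat \<Rightarrow> nat \<Rightarrow> nat" where
  "longest n = (\<lambda>x. if x \<in> {1..n} then n + 1 - x else x)"

definition fpf_invols :: "nat \<Rightarrow> (nat \<Rightarrow> nat) set" where
  "fpf_invols m = {z. z permutes {1..m} \<and> z \<circ> z = id \<and> (\<forall>x\<in>{1..m}. z x \<noteq> x)}"

definition Y1 :: "nat \<Rightarrow> (nat \<Rightarrow> nat) set" where
  "Y1 n = {longest n \<circ> z \<circ> sgen (n - 1) \<circ> longest n | z. z \<in> fpf_invols (n - 2)}"

fun sigma :: "nat \<Rightarrow> nat \<Rightarrow> nat" where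
  "sigma 0 = id"
| "sigma (Suc i) = sgen (Suc i) \<circ> sigma i"

definition Yset :: "nat \<Rightarrow> nat \<Rightarrow> (nat \<Rightarrow> nat) set" where
  "Yset n i = {sigma i \<circ> y \<circ> inv (sigma i) | y. y \<in> Y1 n}"

end

theory Submission
  imports Defs
begin

(* Conjugation by a permutation only relabels the points, so the description of Y_1 as the
   products z s_(n-1) with z a fixed-point-free involution of {1..n-2} turns into: Y_1 is the set
   of fixed-point-free involutions w of {1..n} with w 2 = 1, and Y_i = sigma_i Y_1 sigma_i^-1 is the
   set of those with w 1 = i + 1.  Conjugating y by s = s_j gives again a fixed-point-free
   involution, whose value at 1 is s (y (s 1)); it stays i + 1 unless s moves 1 or i + 1, i.e.
   j is 1, i or i + 1, and for i = j = 1 it stays because y and s_1 both swap 1 and 2. *)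

definition fpf_involutions_on :: "'a set \<Rightarrow> ('a \<Rightarrow> 'a) set" where
  "fpf_involutions_on A = {w. w permutes A \<and> w \<circ> w = id \<and> (\<forall>x\<in>A. w x \<noteq> x)}"

lemma fpf_invols_eq: "fpf_invols m = fpf_involutions_on {1..m}"
  by (simp add: fpf_invols_def fpf_involutions_on_def)

lemma involution_apply: "w \<circ> w = id \<Longrightarrow> w (w x) = x"
  by (simp add: fun_eq_iff)

lemma involution_permutes:
  assumes "w \<circ> w = id" and "\<And>x. x \<notin> A \<Longrightarrow> w x = x"
  shows "w permutes A"
  unfolding permutes_def using assms by (metis involution_apply)

lemma involution_comp_transpose_commute:
  assumes "w \<circ> w = id" and "{w a, w b} = {a, b}"
  shows "w \<circ> transpose a b = transpose a b \<circ> w"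
proof -
  have "bij w" and "inv w = w"
    using assms(1) by (simp_all add: o_bij inv_unique_comp)
  moreover have "transpose (w a) (w b) = transpose a b"
    using assms(2) by (auto simp: doubleton_eq_iff transpose_commute)
  ultimately show ?thesis
    by (simp add: transpose_comp_eq)
qed

lemma conj_in_fpf_involutions_on:
  assumes p: "p permutes A" and w: "w \<in> fpf_involutions_on A"
  shows "p \<circ> w \<circ> inv p \<in> fpf_involutions_on A"
proof -
  have wp: "w permutes A" and ww: "w \<circ> w = id" and fp: "\<And>x. x \<in> A \<Longrightarrow> w x \<noteq> x"
    using w by (auto simp: fpf_involutions_on_def)
  have "p \<circ> w \<circ> inv p permutes A"
    by (intro permutes_compose permutes_inv p wp)
  moreover have "(p \<circ> w \<circ> inv p) \<circ> (p \<circ> w \<circ> inv p) = id"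
    by (simp add: fun_eq_iff permutes_inverses[OF p] involution_apply[OF ww])
  moreover have "p (w (inv p x)) \<noteq> x" if "x \<in> A" for x
  proof
    assume "p (w (inv p x)) = x"
    then have "w (inv p x) = inv p x"
      by (metis permutes_inverses(2)[OF p])
    moreover have "inv p x \<in> A"
      using that permutes_in_image[OF permutes_inv[OF p]] by blast
    ultimately show False
      using fp by blast
  qed
  ultimately show ?thesis
    by (simp add: fpf_involutions_on_def)
qed

lemma fpf_involutions_on_insert_pair:
  assumes "a \<notin> A" "b \<notin> A" "a \<noteq> b"
  shows "{w \<in> fpf_involutions_on (insert a (insert b A)). w a = b}
       = (\<lambda>z. z \<circ> transpose a b) ` fpf_involutions_on A"
    (is "?lhs = ?rhs")
proof -
  have fix_A: "transpose a b x = x" if "x \<in> A" for x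
    using that assms by (metis transpose_apply_other)
  have "w \<in> ?rhs" if "w \<in> ?lhs" for w
  proof -
    from that have ww: "w \<circ> w = id" and wp: "w permutes insert a (insert b A)"
      and fp: "\<And>x. x \<in> A \<Longrightarrow> w x \<noteq> x" and wa: "w a = b"
      by (auto simp: fpf_involutions_on_def)
    have wb: "w b = a"
      using involution_apply[OF ww, of a] wa by simp
    define z where "z = w \<circ> transpose a b"
    have comm: "w \<circ> transpose a b = transpose a b \<circ> w"
      using ww wa wb by (intro involution_comp_transpose_commute) auto
    have zz: "z \<circ> z = id"
      unfolding z_def by (metis comp_assoc comm ww transpose_comp_involutory comp_id)
    have "z x = x" if "x \<notin> A" for x
      using that wa wb permutes_not_in[OF wp, of x] assms(3)
      by (cases "x = a \<or> x = b") (auto simp: z_def)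
    with zz have "z permutes A"
      by (rule involution_permutes)
    moreover have "\<forall>x\<in>A. z x \<noteq> x"
      using fp fix_A by (simp add: z_def)
    ultimately have "z \<in> fpf_involutions_on A"
      using zz by (simp add: fpf_involutions_on_def)
    moreover have "w = z \<circ> transpose a b"
      by (simp add: z_def comp_assoc)
    ultimately show "w \<in> ?rhs" by blast
  qed
  moreover have "w \<in> ?lhs" if "w \<in> ?rhs" for w
  proof -
    from that obtain z where w: "w = z \<circ> transpose a b" and z: "z \<in> fpf_involutions_on A"
      by blast
    then have zz: "z \<circ> z = id" and zp: "z permutes A" and fp: "\<And>x. x \<in> A \<Longrightarrow> z x \<noteq> x"
      by (auto simp: fpf_involutions_on_def)
    have za: "z a = a" and zb: "z b = b"
      using assms permutes_not_in[OF zp] by auto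
    have comm: "z \<circ> transpose a b = transpose a b \<circ> z"
      using zz za zb by (intro involution_comp_transpose_commute) auto
    have ww: "w \<circ> w = id"
      unfolding w by (metis comp_assoc comm zz transpose_comp_involutory comp_id)
    have "w x = x" if "x \<notin> insert a (insert b A)" for x
      using that permutes_not_in[OF zp, of x] by (simp add: w)
    with ww have "w permutes insert a (insert b A)"
      by (rule involution_permutes)
    moreover have "\<forall>x\<in>insert a (insert b A). w x \<noteq> x"
      using fp fix_A za zb assms(3) by (auto simp: w)
    moreover have "w a = b"
      by (simp add: w zb)
    ultimately show "w \<in> ?lhs"
      using ww by (simp add: fpf_involutions_on_def)
  qed
  ultimately show ?thesis
    by blast
qed

lemma conj_fpf_involutions_on_value:
  assumes p: "p permutes A"
  shows "(\<lambda>v. p \<circ> v \<circ> inv p) ` {v \<in> fpf_involutions_on A. v a = b}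
       = {w \<in> fpf_involutions_on A. w (p a) = p b}"
    (is "?lhs = ?rhs")
proof (intro equalityI subsetI)
  fix w assume "w \<in> ?lhs"
  then obtain v where "v \<in> fpf_involutions_on A" "v a = b" "w = p \<circ> v \<circ> inv p"
    by blast
  then show "w \<in> ?rhs"
    using conj_in_fpf_involutions_on[OF p] by (simp add: permutes_inverses[OF p])
next
  fix w assume w: "w \<in> ?rhs"
  define v where "v = inv p \<circ> w \<circ> p"
  have "v \<in> fpf_involutions_on A"
    using conj_in_fpf_involutions_on[OF permutes_inv[OF p]] w
    by (simp add: v_def permutes_inv_inv[OF p])
  moreover have "v a = b"
    using w by (simp add: v_def permutes_inverses[OF p])
  moreover have "w = p \<circ> v \<circ> inv p"
    by (simp add: v_def fun_eq_iff permutes_inverses[OF p])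
  ultimately show "w \<in> ?lhs"
    by blast
qed

lemma longest_involution: "longest n \<circ> longest n = id"
  by (auto simp: fun_eq_iff longest_def)

lemma longest_permutes: "longest n permutes {1..n}"
  using longest_involution by (rule involution_permutes) (auto simp: longest_def)

lemma inv_longest: "inv (longest n) = longest n"
  by (rule inv_unique_comp) (fact longest_involution)+

lemma Y1_eq:
  assumes "n \<ge> 2"
  shows "Y1 n = {w \<in> fpf_involutions_on {1..n}. w 2 = 1}"
proof -
  have longest_values: "longest n (n - 1) = 2" "longest n n = 1"
    using assms by (auto simp: longest_def)
  have "sgen (n - 1) = transpose (n - 1) n"
    using assms by (simp add: sgen_def)
  then have "Y1 n = (\<lambda>v. longest n \<circ> v \<circ> inv (longest n))
                    ` (\<lambda>z. z \<circ> transpose (n - 1) n) ` fpf_involutions_on {1..n - 2}"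
    by (simp add: Y1_def Setcompr_eq_image image_image inv_longest fpf_invols_eq comp_assoc)
  also have "(\<lambda>z. z \<circ> transpose (n - 1) n) ` fpf_involutions_on {1..n - 2}
           = {v \<in> fpf_involutions_on {1..n}. v (n - 1) = n}"
  proof -
    have "{v \<in> fpf_involutions_on (insert (n - 1) (insert n {1..n - 2})). v (n - 1) = n}
        = (\<lambda>z. z \<circ> transpose (n - 1) n) ` fpf_involutions_on {1..n - 2}"
      by (rule fpf_involutions_on_insert_pair) (use assms in auto)
    moreover have "insert (n - 1) (insert n {1..n - 2}) = {1..n}"
      using assms by auto
    ultimately show ?thesis
      by simp
  qed
  also have "(\<lambda>v. longest n \<circ> v \<circ> inv (longest n)) ` \<dots>
           = {w \<in> fpf_involutions_on {1..n}. w 2 = 1}"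
    using conj_fpf_involutions_on_value[OF longest_permutes, where a = "n - 1" and b = n]
    by (simp only: longest_values)
  finally show ?thesis .
qed

lemma sigma_permutes: "i < n \<Longrightarrow> sigma i permutes {1..n}"
  by (induction i) (auto simp: sgen_def intro!: permutes_compose permutes_swap_id)

lemma sigma_apply_1: "sigma i 1 = i + 1"
  by (induction i) (auto simp: sgen_def)

lemma sigma_apply_2: "i \<ge> 1 \<Longrightarrow> sigma i 2 = 1"
proof (induction i)
  case (Suc i)
  then show ?case
    by (cases "i = 0") (auto simp: sgen_def transpose_def)
qed simp

lemma Yset_eq:
  assumes "1 \<le> i" and "i < n"
  shows "Yset n i = {w \<in> fpf_involutions_on {1..n}. w 1 = i + 1}"
proof -
  have "Yset n i = (\<lambda>y. sigma i \<circ> y \<circ> inv (sigma i)) ` {y \<in> fpf_involutions_on {1..n}. y 2 = 1}"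
    unfolding Yset_def Setcompr_eq_image using assms by (simp add: Y1_eq)
  also have "\<dots> = {w \<in> fpf_involutions_on {1..n}. w (sigma i 2) = sigma i 1}"
    using assms by (intro conj_fpf_involutions_on_value sigma_permutes)
  finally show ?thesis
    by (simp only: sigma_apply_1 sigma_apply_2[OF assms(1)])
qed

lemma sgen_conj_in_Yset_iff:
  assumes "1 \<le> i" "i < n" "y \<in> Yset n i" "1 \<le> j" "j < n"
  shows "sgen j \<circ> y \<circ> sgen j \<in> Yset n i \<longleftrightarrow> y (sgen j 1) = sgen j (i + 1)"
proof -
  have "sgen j permutes {1..n}"
    using assms by (auto simp: sgen_def intro!: permutes_swap_id)
  moreover have "y \<in> fpf_involutions_on {1..n}"
    using assms by (simp add: Yset_eq)
  ultimately have "sgen j \<circ> y \<circ> sgen j \<in> fpf_involutions_on {1..n}"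
    using conj_in_fpf_involutions_on by (metis inv_transpose_eq sgen_def)
  moreover have "sgen j (y (sgen j 1)) = i + 1 \<longleftrightarrow> y (sgen j 1) = sgen j (i + 1)"
    by (metis sgen_def transpose_involutory)
  ultimately show ?thesis
    using assms(1,2) by (simp add: Yset_eq)
qed

theorem proposition3p8:
  fixes n i j :: nat and y :: "nat \<Rightarrow> nat"
  assumes "even n" and "n \<ge> 4"
    and "1 \<le> i" and "i \<le> n - 1"
    and "y \<in> Yset n i"
    and "1 \<le> j" and "j \<le> n - 1"
    and "sgen j \<circ> y \<circ> sgen j \<notin> Yset n i"
  shows "(i = 1 \<longrightarrow> j = 2)
       \<and> (2 \<le> i \<and> i \<le> n - 2 \<longrightarrow> j \<in> {1, i, i + 1})
       \<and> (i = n - 1 \<longrightarrow> j \<in> {1, n - 1})"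
proof -
  have i: "1 \<le> i" "i < n" and j: "1 \<le> j" "j < n"
    using assms by auto
  have y: "y \<in> fpf_involutions_on {1..n}" "y 1 = i + 1"
    using assms(5) i by (simp_all add: Yset_eq)
  have moved: "y (sgen j 1) \<noteq> sgen j (i + 1)"
    using assms(5,8) sgen_conj_in_Yset_iff i j by blast
  have "j \<in> {1, i, i + 1}"
  proof (rule ccontr)
    assume "j \<notin> {1, i, i + 1}"
    then have "sgen j 1 = 1" and "sgen j (i + 1) = i + 1"
      using j by (auto simp: sgen_def transpose_def)
    with moved y show False
      by simp
  qed
  moreover have "\<not> (i = 1 \<and> j = 1)"
  proof
    assume "i = 1 \<and> j = 1"
    moreover have "y (y 1) = 1"
      using y(1) unfolding fpf_involutions_on_def by (blast dest: involution_apply)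
    ultimately show False
      using moved y by (simp add: sgen_def)
  qed
  ultimately show ?thesis
    using assms by auto
qed

end
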